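(* Let $k$ be a field, $n\ge 1$, and let $Q_H$ be the quiver with vertices $x_1,\ldots,x_{n+1},y_1,\ldots,y_n$ and arrows $r_i:x_i\to y_i$, $l_i:y_i\to x_{i+1}$, $a_i:x_i\to x_{i+1}$ for $i=1,\ldots,n$. Put $m_{ij}=a_{i+1}\cdots a_{j-1}$ (for $0\le i<j$, with $m_{i,i+1}$ the stationary path at $x_{i+1}$), $A_i=r_il_i$, $T_i=A_ia_i^{-1}$ and $\alpha_i=m_{0i}T_im_{0i}^{-1}$, a closed walk at $x_1$. Let $1\le i<j\le n$ and let $I$ be an admissible ideal of $kQ_H$ in which $a_im_{ij}A_j+A_im_{ij}a_j$ is a minimal relation. Then $\tilde\alpha_i=\tilde\alpha_j$ in $\pi_1(Q_H,I,x_1)$.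
   Context: An ideal $I$ of $kQ$ is admissible if $F^m\subseteq I\subseteq F^2$ for some $m\ge2$, $F$ the arrow ideal. For vertices $x,y$, $I(x,y)=e_x(kQ)e_y\cap I$; a relation $\sum_{i=1}^{r}\lambda_i w_i\in I(x,y)$ ($\lambda_i\in k^*$, $w_i$ distinct paths $x\to y$) is minimal if $r\ge2$ and no proper nonempty subsum lies in $I(x,y)$. Walks are composable sequences of arrows and formal inverses $\alpha^{-1}$. Homotopy $\sim$ is the smallest equivalence relation on walks with $\alpha\alpha^{-1}\sim e_{s(\alpha)}$, $\alpha^{-1}\alpha\sim e_{t(\alpha)}$, $w_i\sim w_j$ for paths occurring in a common minimal relation of $I$, and $u\sim v\Rightarrow wuw'\sim wvw'$. $\pi_1(Q,I,x_1)$ is the group of homotopy classes $\tilde w$ of closed walks at $x_1$. *)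

theory Defs
  imports Main
begin

text \<open>A path is a pair (start vertex, list of arrows), composed left to right,
  so (x, []) is the stationary path e_x.\<close>

fun path_ok :: "'v set \<Rightarrow> 'a set \<Rightarrow> ('a \<Rightarrow> 'v) \<Rightarrow> ('a \<Rightarrow> 'v) \<Rightarrow> 'v \<Rightarrow> 'a list \<Rightarrow> bool" where
  "path_ok Vs Ar src tgt v [] = (v \<in> Vs)"
| "path_ok Vs Ar src tgt v (a # as) = (v \<in> Vs \<and> a \<in> Ar \<and> src a = v \<and> path_ok Vs Ar src tgt (tgt a) as)"

fun path_end :: "('a \<Rightarrow> 'v) \<Rightarrow> 'v \<Rightarrow> 'a list \<Rightarrow> 'v" where
  "path_end tgt v [] = v"
| "path_end tgt v (a # as) = path_end tgt (tgt a) as"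

definition is_path :: "'v set \<Rightarrow> 'a set \<Rightarrow> ('a \<Rightarrow> 'v) \<Rightarrow> ('a \<Rightarrow> 'v) \<Rightarrow> 'v \<times> 'a list \<Rightarrow> bool" where
  "is_path Vs Ar src tgt p = path_ok Vs Ar src tgt (fst p) (snd p)"

definition supp :: "('p \<Rightarrow> 'k::zero) \<Rightarrow> 'p set" where
  "supp f = {p. f p \<noteq> 0}"

definition path_alg :: "'v set \<Rightarrow> 'a set \<Rightarrow> ('a \<Rightarrow> 'v) \<Rightarrow> ('a \<Rightarrow> 'v) \<Rightarrow> (('v \<times> 'a list) \<Rightarrow> 'k::field) set" where
  "path_alg Vs Ar src tgt = {f. finite (supp f) \<and> (\<forall>p \<in> supp f. is_path Vs Ar src tgt p)}"

text \<open>Multiplication in kQ (concatenation of paths, extended bilinearly).\<close>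

definition pmult :: "('a \<Rightarrow> 'v) \<Rightarrow> (('v \<times> 'a list) \<Rightarrow> 'k::field) \<Rightarrow> (('v \<times> 'a list) \<Rightarrow> 'k) \<Rightarrow> ('v \<times> 'a list) \<Rightarrow> 'k" where
  "pmult tgt f g p = (\<Sum>k \<in> {0..length (snd p)}.
      f (fst p, take k (snd p)) * g (path_end tgt (fst p) (take k (snd p)), drop k (snd p)))"

definition is_ideal :: "'v set \<Rightarrow> 'a set \<Rightarrow> ('a \<Rightarrow> 'v) \<Rightarrow> ('a \<Rightarrow> 'v) \<Rightarrow> (('v \<times> 'a list) \<Rightarrow> 'k::field) set \<Rightarrow> bool" where
  "is_ideal Vs Ar src tgt I \<longleftrightarrow>
     I \<subseteq> path_alg Vs Ar src tgt \<and> (\<lambda>_. 0) \<in> I \<and>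
     (\<forall>f \<in> I. \<forall>g \<in> I. (\<lambda>p. f p + g p) \<in> I) \<and>
     (\<forall>f \<in> I. (\<lambda>p. - f p) \<in> I) \<and>
     (\<forall>f \<in> path_alg Vs Ar src tgt. \<forall>g \<in> I. pmult tgt f g \<in> I \<and> pmult tgt g f \<in> I)"

definition arrow_ideal_pow :: "'v set \<Rightarrow> 'a set \<Rightarrow> ('a \<Rightarrow> 'v) \<Rightarrow> ('a \<Rightarrow> 'v) \<Rightarrow> nat \<Rightarrow> (('v \<times> 'a list) \<Rightarrow> 'k::field) set" where
  "arrow_ideal_pow Vs Ar src tgt m =
     {f \<in> path_alg Vs Ar src tgt. \<forall>p \<in> supp f. m \<le> length (snd p)}"

definition admissible :: "'v set \<Rightarrow> 'a set \<Rightarrow> ('a \<Rightarrow> 'v) \<Rightarrow> ('a \<Rightarrow> 'v) \<Rightarrow> (('v \<times> 'a list) \<Rightarrow> 'k::field) set \<Rightarrow> bool" where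
  "admissible Vs Ar src tgt I \<longleftrightarrow> is_ideal Vs Ar src tgt I \<and>
     (\<exists>m\<ge>2. arrow_ideal_pow Vs Ar src tgt m \<subseteq> I \<and> I \<subseteq> arrow_ideal_pow Vs Ar src tgt 2)"

definition minimal_relation :: "'v set \<Rightarrow> 'a set \<Rightarrow> ('a \<Rightarrow> 'v) \<Rightarrow> ('a \<Rightarrow> 'v) \<Rightarrow> (('v \<times> 'a list) \<Rightarrow> 'k::field) set \<Rightarrow> (('v \<times> 'a list) \<Rightarrow> 'k) \<Rightarrow> bool" where
  "minimal_relation Vs Ar src tgt I \<rho> \<longleftrightarrow>
     \<rho> \<in> I \<and>
     (\<exists>x y. \<forall>p \<in> supp \<rho>. fst p = x \<and> path_end tgt (fst p) (snd p) = y) \<and>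
     2 \<le> card (supp \<rho>) \<and>
     (\<forall>T. T \<subset> supp \<rho> \<and> T \<noteq> {} \<longrightarrow> (\<lambda>p. if p \<in> T then \<rho> p else 0) \<notin> I)"

text \<open>A letter (a, True) is the arrow a, (a, False) is its formal inverse a^-1.
  A walk is a pair (start vertex, list of letters).\<close>

definition lsrc :: "('a \<Rightarrow> 'v) \<Rightarrow> ('a \<Rightarrow> 'v) \<Rightarrow> 'a \<times> bool \<Rightarrow> 'v" where
  "lsrc src tgt l = (if snd l then src (fst l) else tgt (fst l))"

definition ltgt :: "('a \<Rightarrow> 'v) \<Rightarrow> ('a \<Rightarrow> 'v) \<Rightarrow> 'a \<times> bool \<Rightarrow> 'v" where
  "ltgt src tgt l = (if snd l then tgt (fst l) else src (fst l))"

fun walk_ok :: "'v set \<Rightarrow> 'a set \<Rightarrow> ('a \<Rightarrow> 'v) \<Rightarrow> ('a \<Rightarrow> 'v) \<Rightarrow> 'v \<Rightarrow> ('a \<times> bool) list \<Rightarrow> bool" where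
  "walk_ok Vs Ar src tgt v [] = (v \<in> Vs)"
| "walk_ok Vs Ar src tgt v (l # ls) = (v \<in> Vs \<and> fst l \<in> Ar \<and> lsrc src tgt l = v \<and>
       walk_ok Vs Ar src tgt (ltgt src tgt l) ls)"

fun walk_end :: "('a \<Rightarrow> 'v) \<Rightarrow> ('a \<Rightarrow> 'v) \<Rightarrow> 'v \<Rightarrow> ('a \<times> bool) list \<Rightarrow> 'v" where
  "walk_end src tgt v [] = v"
| "walk_end src tgt v (l # ls) = walk_end src tgt (ltgt src tgt l) ls"

definition path_walk :: "'v \<times> 'a list \<Rightarrow> 'v \<times> ('a \<times> bool) list" where
  "path_walk p = (fst p, map (\<lambda>a. (a, True)) (snd p))"

inductive htpy :: "'v set \<Rightarrow> 'a set \<Rightarrow> ('a \<Rightarrow> 'v) \<Rightarrow> ('a \<Rightarrow> 'v) \<Rightarrow> (('v \<times> 'a list) \<Rightarrow> 'k::field) set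
    \<Rightarrow> 'v \<times> ('a \<times> bool) list \<Rightarrow> 'v \<times> ('a \<times> bool) list \<Rightarrow> bool"
  for Vs Ar src tgt I where
  refl: "walk_ok Vs Ar src tgt v u \<Longrightarrow> htpy Vs Ar src tgt I (v, u) (v, u)"
| sym: "htpy Vs Ar src tgt I u v \<Longrightarrow> htpy Vs Ar src tgt I v u"
| trans: "htpy Vs Ar src tgt I u v \<Longrightarrow> htpy Vs Ar src tgt I v w \<Longrightarrow> htpy Vs Ar src tgt I u w"
| cancel1: "a \<in> Ar \<Longrightarrow> src a \<in> Vs \<Longrightarrow> tgt a \<in> Vs \<Longrightarrow>
     htpy Vs Ar src tgt I (src a, [(a, True), (a, False)]) (src a, [])"
| cancel2: "a \<in> Ar \<Longrightarrow> src a \<in> Vs \<Longrightarrow> tgt a \<in> Vs \<Longrightarrow>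
     htpy Vs Ar src tgt I (tgt a, [(a, False), (a, True)]) (tgt a, [])"
| rel: "minimal_relation Vs Ar src tgt I \<rho> \<Longrightarrow> p \<in> supp \<rho> \<Longrightarrow> q \<in> supp \<rho> \<Longrightarrow>
     htpy Vs Ar src tgt I (path_walk p) (path_walk q)"
| ctx: "htpy Vs Ar src tgt I (v, u) (v', u') \<Longrightarrow>
     walk_ok Vs Ar src tgt x (w @ u @ w') \<Longrightarrow> walk_ok Vs Ar src tgt x (w @ u' @ w') \<Longrightarrow>
     walk_end src tgt x w = v \<Longrightarrow> walk_end src tgt x w = v' \<Longrightarrow>
     htpy Vs Ar src tgt I (x, w @ u @ w') (x, w @ u' @ w')"

definition hclass :: "'v set \<Rightarrow> 'a set \<Rightarrow> ('a \<Rightarrow> 'v) \<Rightarrow> ('a \<Rightarrow> 'v) \<Rightarrow> (('v \<times> 'a list) \<Rightarrow> 'k::field) set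
    \<Rightarrow> 'v \<times> ('a \<times> bool) list \<Rightarrow> ('v \<times> ('a \<times> bool) list) set" where
  "hclass Vs Ar src tgt I w = {w'. htpy Vs Ar src tgt I w w'}"

definition fund_group_carrier :: "'v set \<Rightarrow> 'a set \<Rightarrow> ('a \<Rightarrow> 'v) \<Rightarrow> ('a \<Rightarrow> 'v) \<Rightarrow> (('v \<times> 'a list) \<Rightarrow> 'k::field) set
    \<Rightarrow> 'v \<Rightarrow> ('v \<times> ('a \<times> bool) list) set set" where
  "fund_group_carrier Vs Ar src tgt I x =
     {hclass Vs Ar src tgt I (x, w) | w. walk_ok Vs Ar src tgt x w \<and> walk_end src tgt x w = x}"

datatype hvert = X nat | Y nat
datatype harrow = R nat | L nat | Aa nat

fun hsrc :: "harrow \<Rightarrow> hvert" where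
  "hsrc (R i) = X i" | "hsrc (L i) = Y i" | "hsrc (Aa i) = X i"

fun htgt :: "harrow \<Rightarrow> hvert" where
  "htgt (R i) = Y i" | "htgt (L i) = X (Suc i)" | "htgt (Aa i) = X (Suc i)"

definition QH_V :: "nat \<Rightarrow> hvert set" where
  "QH_V n = {X i | i. 1 \<le> i \<and> i \<le> n + 1} \<union> {Y i | i. 1 \<le> i \<and> i \<le> n}"

definition QH_A :: "nat \<Rightarrow> harrow set" where
  "QH_A n = {R i | i. 1 \<le> i \<and> i \<le> n} \<union> {L i | i. 1 \<le> i \<and> i \<le> n} \<union> {Aa i | i. 1 \<le> i \<and> i \<le> n}"

definition m_path :: "nat \<Rightarrow> nat \<Rightarrow> harrow list" where
  "m_path i j = map Aa [Suc i..<j]"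

definition A_path :: "nat \<Rightarrow> harrow list" where
  "A_path i = [R i, L i]"

definition fwd :: "harrow list \<Rightarrow> (harrow \<times> bool) list" where
  "fwd ps = map (\<lambda>a. (a, True)) ps"

definition inv_walk :: "(harrow \<times> bool) list \<Rightarrow> (harrow \<times> bool) list" where
  "inv_walk ws = rev (map (\<lambda>l. (fst l, \<not> snd l)) ws)"

definition T_walk :: "nat \<Rightarrow> (harrow \<times> bool) list" where
  "T_walk i = fwd (A_path i) @ [(Aa i, False)]"

definition alpha_walk :: "nat \<Rightarrow> hvert \<times> (harrow \<times> bool) list" where
  "alpha_walk i = (X 1, fwd (m_path 0 i) @ T_walk i @ inv_walk (fwd (m_path 0 i)))"

definition hrel :: "nat \<Rightarrow> nat \<Rightarrow> (hvert \<times> harrow list) \<Rightarrow> 'k::field" where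
  "hrel i j p = (if p = (X i, [Aa i] @ m_path i j @ A_path j) \<or>
                    p = (X i, A_path i @ m_path i j @ [Aa j]) then 1 else 0)"

end

theory Submission
  imports Defs
begin

text \<open>Write \<open>m\<^sub>0\<^sub>j = m\<^sub>0\<^sub>i a\<^sub>i m\<^sub>i\<^sub>j\<close>. Then \<open>\<alpha>\<^sub>j\<close> contains the path \<open>a\<^sub>i m\<^sub>i\<^sub>j A\<^sub>j\<close>, which the minimal
  relation lets us replace by \<open>A\<^sub>i m\<^sub>i\<^sub>j a\<^sub>j\<close>; the resulting walk contains \<open>m\<^sub>i\<^sub>j a\<^sub>j\<close> followed by
  its inverse, and cancelling it leaves exactly \<open>m\<^sub>0\<^sub>i A\<^sub>i a\<^sub>i\<^sup>-\<^sup>1 m\<^sub>0\<^sub>i\<^sup>-\<^sup>1 = \<alpha>\<^sub>i\<close>.\<close>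

definition walk_between ::
    "'v set \<Rightarrow> 'a set \<Rightarrow> ('a \<Rightarrow> 'v) \<Rightarrow> ('a \<Rightarrow> 'v) \<Rightarrow> 'v \<Rightarrow> ('a \<times> bool) list \<Rightarrow> 'v \<Rightarrow> bool" where
  "walk_between Vs Ar src tgt x w y \<longleftrightarrow> walk_ok Vs Ar src tgt x w \<and> walk_end src tgt x w = y"

lemma walk_ok_start: "walk_ok Vs Ar src tgt v w \<Longrightarrow> v \<in> Vs"
  by (cases w) auto

lemma walk_ok_append:
  "walk_ok Vs Ar src tgt v (w @ w') \<longleftrightarrow>
     walk_ok Vs Ar src tgt v w \<and> walk_ok Vs Ar src tgt (walk_end src tgt v w) w'"
  by (induction w arbitrary: v) (auto dest: walk_ok_start)

lemma walk_end_append [simp]: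
  "walk_end src tgt v (w @ w') = walk_end src tgt (walk_end src tgt v w) w'"
  by (induction w arbitrary: v) auto

lemma walk_between_append:
  "walk_between Vs Ar src tgt x w y \<Longrightarrow> walk_between Vs Ar src tgt y w' z \<Longrightarrow>
   walk_between Vs Ar src tgt x (w @ w') z"
  by (simp add: walk_between_def walk_ok_append)

lemma inv_walk_append [simp]: "inv_walk (w @ w') = inv_walk w' @ inv_walk w"
  by (simp add: inv_walk_def)

lemma walk_between_inv_walk:
  "walk_between Vs Ar src tgt x w y \<Longrightarrow> walk_between Vs Ar src tgt y (inv_walk w) x"
proof (induction w arbitrary: x)
  case Nil
  then show ?case by (auto simp: walk_between_def inv_walk_def)
next
  case (Cons l w)
  then have "walk_between Vs Ar src tgt (ltgt src tgt l) w y"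
    and "walk_between Vs Ar src tgt (ltgt src tgt l) [(fst l, \<not> snd l)] x"
    by (auto simp: walk_between_def lsrc_def ltgt_def dest: walk_ok_start)
  with Cons.IH have "walk_between Vs Ar src tgt y (inv_walk w @ [(fst l, \<not> snd l)]) x"
    by (blast intro: walk_between_append)
  then show ?case by (simp add: inv_walk_def)
qed

lemma hclass_eq_if_htpy:
  "htpy Vs Ar src tgt I u v \<Longrightarrow> hclass Vs Ar src tgt I u = hclass Vs Ar src tgt I v"
  unfolding hclass_def by (blast intro: htpy.sym htpy.trans)

declare htpy.trans [trans]

lemma htpy_in_context:
  assumes "htpy Vs Ar src tgt I (v, u) (v, u')"
    and "walk_between Vs Ar src tgt x w v"
    and "walk_ok Vs Ar src tgt x (w @ u @ w')" and "walk_ok Vs Ar src tgt x (w @ u' @ w')"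
  shows "htpy Vs Ar src tgt I (x, w @ u @ w') (x, w @ u' @ w')"
  using assms by (intro htpy.ctx) (auto simp: walk_between_def)

lemma htpy_cancel_letter:
  assumes "fst l \<in> Ar" "src (fst l) \<in> Vs" "tgt (fst l) \<in> Vs"
  shows "htpy Vs Ar src tgt I (lsrc src tgt l, [l, (fst l, \<not> snd l)]) (lsrc src tgt l, [])"
  using assms by (cases l) (auto simp: lsrc_def intro: htpy.cancel1 htpy.cancel2)

lemma htpy_cancel_inv_walk:
  "walk_ok Vs Ar src tgt x (w @ q @ inv_walk q @ w') \<Longrightarrow>
   htpy Vs Ar src tgt I (x, w @ q @ inv_walk q @ w') (x, w @ w')"
proof (induction q arbitrary: w' rule: rev_induct)
  case Nil
  then show ?case by (simp add: inv_walk_def htpy.refl)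
next
  case (snoc l q)
  define l' where "l' = (fst l, \<not> snd l)"
  define v where "v = walk_end src tgt x (w @ q)"
  have split: "w @ (q @ [l]) @ inv_walk (q @ [l]) @ w' = (w @ q) @ [l, l'] @ (inv_walk q @ w')"
    by (simp add: l'_def inv_walk_def)
  have whole: "walk_ok Vs Ar src tgt x ((w @ q) @ [l, l'] @ (inv_walk q @ w'))"
    using snoc.prems unfolding split .
  then have ok: "walk_ok Vs Ar src tgt x (w @ q)"
    and ok_ll': "walk_ok Vs Ar src tgt v (l # l' # inv_walk q @ w')"
    unfolding v_def by (simp_all only: walk_ok_append append_Cons append_Nil)
  then have letter: "fst l \<in> Ar" "lsrc src tgt l = v" "ltgt src tgt l \<in> Vs"
    and rest: "walk_ok Vs Ar src tgt v (inv_walk q @ w')"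
    by (auto simp: l'_def lsrc_def ltgt_def split: if_splits dest: walk_ok_start)
  have "htpy Vs Ar src tgt I (v, [l, l']) (v, [])"
    using htpy_cancel_letter[of l Ar src Vs tgt I] letter walk_ok_start[OF ok_ll']
    by (auto simp: l'_def lsrc_def ltgt_def split: if_splits)
  moreover have cancelled: "walk_ok Vs Ar src tgt x ((w @ q) @ [] @ inv_walk q @ w')"
    using ok rest by (simp add: walk_ok_append v_def)
  ultimately have "htpy Vs Ar src tgt I (x, (w @ q) @ [l, l'] @ inv_walk q @ w')
      (x, (w @ q) @ [] @ inv_walk q @ w')"
    using whole ok by (intro htpy_in_context) (auto simp: walk_between_def v_def)
  moreover have "htpy Vs Ar src tgt I (x, w @ q @ inv_walk q @ w') (x, w @ w')"
    using cancelled by (intro snoc.IH) simp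
  ultimately show ?case
    unfolding split by (auto intro: htpy.trans)
qed

lemma htpy_conj_exchange:
  assumes p: "walk_between Vs Ar src tgt x p v"
    and "walk_between Vs Ar src tgt v s v'" and "walk_between Vs Ar src tgt v s' v'"
    and "walk_between Vs Ar src tgt v' m v''"
    and "walk_between Vs Ar src tgt v'' t y" and "walk_between Vs Ar src tgt v'' t' y"
    and rel: "htpy Vs Ar src tgt I (v, s @ m @ t) (v, s' @ m @ t')"
  shows "htpy Vs Ar src tgt I (x, p @ (s @ m @ t) @ inv_walk (p @ s @ m @ t'))
           (x, p @ s' @ inv_walk (p @ s))"
proof -
  define home where "home = inv_walk (p @ s @ m @ t')"
  have "walk_between Vs Ar src tgt y home x"
    unfolding home_def using assms by (blast intro: walk_between_inv_walk walk_between_append)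
  then have whole: "walk_between Vs Ar src tgt x (p @ (s @ m @ t) @ home) x"
    "walk_between Vs Ar src tgt x (p @ (s' @ m @ t') @ home) x"
    using assms by (blast intro: walk_between_append)+
  then have "htpy Vs Ar src tgt I (x, p @ (s @ m @ t) @ home) (x, p @ (s' @ m @ t') @ home)"
    by (intro htpy_in_context[OF rel p]) (simp_all add: walk_between_def)
  also have "p @ (s' @ m @ t') @ home
      = (p @ s') @ (m @ t') @ inv_walk (m @ t') @ inv_walk (p @ s)"
    by (simp add: home_def)
  also have "htpy Vs Ar src tgt I (x, \<dots>) (x, (p @ s') @ inv_walk (p @ s))"
    by (rule htpy_cancel_inv_walk) (use whole(2) in \<open>simp add: home_def walk_between_def\<close>)
  finally show ?thesis
    by (simp add: home_def)
qed

lemma fwd_append [simp]: "fwd (ps @ qs) = fwd ps @ fwd qs"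
  by (simp add: fwd_def)

lemma walk_between_Aa_upt:
  assumes "1 \<le> a" "a \<le> b" "b \<le> n + 1"
  shows "walk_between (QH_V n) (QH_A n) hsrc htgt (X a) (fwd (map Aa [a..<b])) (X b)"
  using \<open>a \<le> b\<close>
proof (induction rule: dec_induct)
  case base
  show ?case using assms by (auto simp: walk_between_def fwd_def QH_V_def)
next
  case (step b)
  have "walk_between (QH_V n) (QH_A n) hsrc htgt (X b) (fwd [Aa b]) (X (Suc b))"
    using assms step.hyps
    by (auto simp: walk_between_def fwd_def QH_V_def QH_A_def lsrc_def ltgt_def)
  with step show ?case by (auto intro: walk_between_append)
qed

lemma walk_between_A_path:
  "1 \<le> i \<Longrightarrow> i \<le> n \<Longrightarrow> walk_between (QH_V n) (QH_A n) hsrc htgt (X i) (fwd (A_path i)) (X (Suc i))"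
  by (auto simp: walk_between_def fwd_def A_path_def QH_V_def QH_A_def lsrc_def ltgt_def)

lemma m_path_split:
  assumes "k < i" "i < j"
  shows "m_path k j = m_path k i @ [Aa i] @ m_path i j"
proof -
  have "[Suc k..<j] = [Suc k..<i] @ [i..<j]"
    using assms upt_add_eq_append[of "Suc k" i "j - i"] by simp
  then show ?thesis
    using assms by (simp add: m_path_def upt_conv_Cons)
qed

lemma supp_hrel:
  "supp (hrel i j :: _ \<Rightarrow> 'k::field) =
     {(X i, [Aa i] @ m_path i j @ A_path j), (X i, A_path i @ m_path i j @ [Aa j])}"
  by (auto simp: supp_def hrel_def)

theorem mainTheorem4:
  fixes I :: "((hvert \<times> harrow list) \<Rightarrow> 'k::field) set" and n i j :: nat
  assumes "1 \<le> n" and "1 \<le> i" and "i < j" and "j \<le> n"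
    and "admissible (QH_V n) (QH_A n) hsrc htgt I"
    and "minimal_relation (QH_V n) (QH_A n) hsrc htgt I (hrel i j)"
  shows "hclass (QH_V n) (QH_A n) hsrc htgt I (alpha_walk i)
       = hclass (QH_V n) (QH_A n) hsrc htgt I (alpha_walk j)"
proof -
  let ?W = "walk_between (QH_V n) (QH_A n) hsrc htgt"
  define P where "P = m_path 0 i"
  define M where "M = m_path i j"
  have P: "?W (X 1) (fwd P) (X i)" and ai: "?W (X i) (fwd [Aa i]) (X (Suc i))"
    and M: "?W (X (Suc i)) (fwd M) (X j)" and aj: "?W (X j) (fwd [Aa j]) (X (Suc j))"
    using assms walk_between_Aa_upt[of 1 i n] walk_between_Aa_upt[of i "Suc i" n]
      walk_between_Aa_upt[of "Suc i" j n] walk_between_Aa_upt[of j "Suc j" n]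
    by (simp_all add: P_def M_def m_path_def)
  have Ai: "?W (X i) (fwd (A_path i)) (X (Suc i))" and Aj: "?W (X j) (fwd (A_path j)) (X (Suc j))"
    using assms by (simp_all add: walk_between_A_path)
  have "htpy (QH_V n) (QH_A n) hsrc htgt I (X i, fwd ([Aa i] @ M @ A_path j))
      (X i, fwd (A_path i @ M @ [Aa j]))"
    using htpy.rel[OF assms(6), of "(X i, [Aa i] @ M @ A_path j)" "(X i, A_path i @ M @ [Aa j])"]
    by (simp add: supp_hrel path_walk_def fwd_def M_def)
  then have "htpy (QH_V n) (QH_A n) hsrc htgt I (alpha_walk j) (alpha_walk i)"
    using htpy_conj_exchange[OF P ai Ai M Aj aj] assms m_path_split[of 0 i j]
    by (simp add: alpha_walk_def T_walk_def P_def M_def inv_walk_def fwd_def)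
  then show ?thesis
    by (metis hclass_eq_if_htpy htpy.sym)
qed

end
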